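(* Let $\mu=\mu_\beta$ be a central state of a model in the class described in the context, and let $\beta_0>0$ and $p_1^0(\beta,u,U,d)>0$ be such that for $\beta>\beta_0$ and $p_1(\mu)<p_1^0$ one has $\mu\otimes\mu(\{(\omega,\omega'):\pi(\cdot\mid\omega)\perp\pi(\cdot\mid\omega')\})=1$ (such constants exist). Then for such $\beta$ and $\mu$, the extremal decomposition measure $\alpha_\mu$ of $\mu$ has no atoms: $\alpha_\mu(\{\nu\})=0$ for every $\nu\in{\rm ex}\,\mathcal G(\gamma)$. In particular uncountably many extremal Gibbs measures enter the extremal decomposition of $\mu$.
   Context: Let $d\ge 2$, $\mathcal T^d=(V,E)$ the Cayley tree in which every vertex has $d+1$ neighbours, $q\ge2$, $\Omega=\mathbb Z_q^V$ with product $\sigma$-algebra $\mathcal F$. Model: formal Hamiltonian $H(\omega)=\sum_{\{v,w\}\in E}u_{\omega_v,\omega_w}+\sum_v\Psi(\omega_v)$, $(u_{i,j})$ symmetric, $u_{i,i}=0$, $0<u:=\min_{i\neq j}u_{i,j}\le\max u_{i,j}=:U$, $\|\Psi\|_\infty\le u(d-1)/8$. Gibbs specification $\gamma$: $\gamma_\Lambda(\omega_\Lambda\mid\omega_{\Lambda^c})=(Z^\omega_\Lambda)^{-1}\prod_{\{v,w\}\cap\Lambda\neq\emptyset}Q(\omega_v,\omega_w)$, $Q(i,j)=e^{-\beta(u_{i,j}+(\Psi(i)+\Psi(j))/(d+1))}$. $\mathcal G(\gamma)$ is the convex set of Gibbs measures (solutions of the DLR equations), ${\rm ex}\,\mathcal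 G(\gamma)$ its extreme points, equipped with the evaluation $\sigma$-algebra (generated by $\nu\mapsto\nu(A)$, $A\in\mathcal F$). Central state: let $Q_0(i,j)=g(i-j)$, $g$ even strictly positive, $\sum_jg(j)=1$, no eigenvalue of $Q_0$ equal to $1/d$; for $Q$ near $Q_0$ there is a $C^1$ solution $\bar x(Q)>0$ of $x(i)=\sum_jQ(i,j)x(j)^d$ with $\bar x(Q_0)\equiv1$. If the model's transfer matrix is a positive multiple of such $Q$, the central state is the Gibbs measure which is the homogeneous tree-indexed Markov chain with marginal $\propto\bar x^{d+1}$ and transition matrix $P(i,j)=Q(i,j)\bar x(j)^d/\sum_kQ(i,k)\bar x(k)^d$. $p_1(\mu)=\max_i\sum_{j\neq i}P(i,j)$. $\pi(\cdot\mid\omega)=\lim_{\Lambda\uparrow V}\gamma_\Lambda(\cdot\mid\omega)$ if the limit exists for all cylinder events, a fixed arbitrary probability measure otherwise; for $\mu$-a.e. $\omega$ it is an extremal Gibbs measure. The extremal decomposition measure is $\alpha_\mu(M)=\mu(\{\omega:\pi(\cdot\mid\omega)\in M\})$ for measurable $M\subset{\rm ex}\,\mathcal G(\gamma)$, so that $\mu=\int\nu\,\alpha_\mu(d\nu)$. *)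

theory Defs
  imports "HOL-Probability.Probability" "HOL-Analysis.Analysis"
begin

text \<open>Vertices: reduced words over the letters 0..d (no two equal consecutive letters),
  i.e. the Cayley graph of the free product of d+1 copies of Z_2.  Each unordered edge is
  represented once, as a pair (parent, child) with parent = tl child.\<close>

definition tree_V :: "nat \<Rightarrow> nat list set" where
  "tree_V d = {xs. set xs \<subseteq> {..d} \<and> (\<forall>i. Suc i < length xs \<longrightarrow> xs ! i \<noteq> xs ! Suc i)}"

definition tree_E :: "nat \<Rightarrow> (nat list \<times> nat list) set" where
  "tree_E d = {(v, w). w \<in> tree_V d \<and> w \<noteq> [] \<and> v = tl w}"

definition tree_ball :: "nat \<Rightarrow> nat \<Rightarrow> nat list set" where
  "tree_ball d n = {v \<in> tree_V d. length v \<le> n}"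

text \<open>The spin space Z_q is represented by a finite type 's with CARD('s) = q.\<close>

definition Omega :: "nat \<Rightarrow> (nat list \<Rightarrow> 's) measure" where
  "Omega d = PiM (tree_V d) (\<lambda>_. count_space UNIV)"

definition transfer :: "real \<Rightarrow> ('s::finite \<Rightarrow> 's \<Rightarrow> real) \<Rightarrow> ('s \<Rightarrow> real) \<Rightarrow> nat \<Rightarrow> real^'s^'s" where
  "transfer \<beta> u \<Psi> d = (\<chi> i j. exp (- \<beta> * (u i j + (\<Psi> i + \<Psi> j) / (real d + 1))))"

definition conf_merge :: "nat list set \<Rightarrow> (nat list \<Rightarrow> 's) \<Rightarrow> (nat list \<Rightarrow> 's) \<Rightarrow> nat list \<Rightarrow> 's" where
  "conf_merge \<Lambda> \<sigma> \<omega> = (\<lambda>v. if v \<in> \<Lambda> then \<sigma> v else \<omega> v)"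

definition boltz_weight :: "nat \<Rightarrow> real^'s^'s \<Rightarrow> nat list set \<Rightarrow> (nat list \<Rightarrow> 's::finite) \<Rightarrow> real" where
  "boltz_weight d Q \<Lambda> \<eta> =
     (\<Prod>e\<in>{e \<in> tree_E d. fst e \<in> \<Lambda> \<or> snd e \<in> \<Lambda>}. Q $ \<eta> (fst e) $ \<eta> (snd e))"

definition gibbs_kernel :: "nat \<Rightarrow> real^'s^'s \<Rightarrow> nat list set \<Rightarrow> (nat list \<Rightarrow> 's::finite)
    \<Rightarrow> (nat list \<Rightarrow> 's) set \<Rightarrow> real" where
  "gibbs_kernel d Q \<Lambda> \<omega> A =
     (\<Sum>\<sigma>\<in>PiE \<Lambda> (\<lambda>_. UNIV). boltz_weight d Q \<Lambda> (conf_merge \<Lambda> \<sigma> \<omega>) * indicator A (conf_merge \<Lambda> \<sigma> \<omega>))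
     / (\<Sum>\<sigma>\<in>PiE \<Lambda> (\<lambda>_. UNIV). boltz_weight d Q \<Lambda> (conf_merge \<Lambda> \<sigma> \<omega>))"

definition gibbs_measures :: "nat \<Rightarrow> real^'s^'s \<Rightarrow> (nat list \<Rightarrow> 's::finite) measure set" where
  "gibbs_measures d Q = {\<mu>. sets \<mu> = sets (Omega d) \<and> prob_space \<mu> \<and>
     (\<forall>\<Lambda> A. finite \<Lambda> \<longrightarrow> \<Lambda> \<subseteq> tree_V d \<longrightarrow> A \<in> sets (Omega d) \<longrightarrow>
        measure \<mu> A = (\<integral>\<omega>. gibbs_kernel d Q \<Lambda> \<omega> A \<partial>\<mu>))}"

definition extremal_gibbs :: "nat \<Rightarrow> real^'s^'s \<Rightarrow> (nat list \<Rightarrow> 's::finite) measure set" where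
  "extremal_gibbs d Q = {\<nu> \<in> gibbs_measures d Q. \<forall>\<nu>1 \<nu>2 t.
     \<nu>1 \<in> gibbs_measures d Q \<longrightarrow> \<nu>2 \<in> gibbs_measures d Q \<longrightarrow> 0 < t \<longrightarrow> t < 1 \<longrightarrow>
     (\<forall>A\<in>sets (Omega d). measure \<nu> A = t * measure \<nu>1 A + (1 - t) * measure \<nu>2 A) \<longrightarrow> \<nu>1 = \<nu>2}"

definition cylinder_events :: "nat \<Rightarrow> (nat list \<Rightarrow> 's) set set" where
  "cylinder_events d = {{\<omega> \<in> space (Omega d). restrict \<omega> \<Delta> \<in> B} | \<Delta> B. finite \<Delta> \<and> \<Delta> \<subseteq> tree_V d}"

text \<open>The fixed arbitrary probability measure: a point mass.\<close>
definition default_state :: "nat \<Rightarrow> (nat list \<Rightarrow> 's) measure" where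
  "default_state d = return (Omega d) (\<lambda>v\<in>tree_V d. undefined)"

definition is_limit_state :: "nat \<Rightarrow> real^'s^'s \<Rightarrow> (nat list \<Rightarrow> 's::finite) \<Rightarrow> (nat list \<Rightarrow> 's) measure \<Rightarrow> bool" where
  "is_limit_state d Q \<omega> \<nu> \<longleftrightarrow> sets \<nu> = sets (Omega d) \<and> prob_space \<nu> \<and>
     (\<forall>A\<in>cylinder_events d.
        ((\<lambda>\<Lambda>. gibbs_kernel d Q \<Lambda> \<omega> A) \<longlongrightarrow> measure \<nu> A) (finite_subsets_at_top (tree_V d)))"

definition pi_state :: "nat \<Rightarrow> real^'s^'s \<Rightarrow> (nat list \<Rightarrow> 's::finite) \<Rightarrow> (nat list \<Rightarrow> 's) measure" where
  "pi_state d Q \<omega> = (if \<exists>\<nu>. is_limit_state d Q \<omega> \<nu> then (SOME \<nu>. is_limit_state d Q \<omega> \<nu>) else default_state d)"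

definition mutually_singular :: "nat \<Rightarrow> (nat list \<Rightarrow> 's) measure \<Rightarrow> (nat list \<Rightarrow> 's) measure \<Rightarrow> bool" where
  "mutually_singular d \<nu> \<nu>' \<longleftrightarrow>
     (\<exists>A\<in>sets (Omega d). measure \<nu> A = 0 \<and> measure \<nu>' (space (Omega d) - A) = 0)"

definition model_class :: "nat \<Rightarrow> ('s::finite \<Rightarrow> 's \<Rightarrow> real) \<Rightarrow> ('s \<Rightarrow> real) \<Rightarrow> bool" where
  "model_class d u \<Psi> \<longleftrightarrow> 2 \<le> d \<and> 2 \<le> CARD('s) \<and>
     (\<forall>i j. u i j = u j i) \<and> (\<forall>i. u i i = 0) \<and> (\<forall>i j. i \<noteq> j \<longrightarrow> 0 < u i j) \<and>
     (\<forall>i. \<bar>\<Psi> i\<bar> \<le> Min {u i j | i j. i \<noteq> j} * (real d - 1) / 8)"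

text \<open>Q0(i,j) = g(i - j) (difference in Z_q, via a bijection idx of the spin type onto {..<q});
  g even, strictly positive, summing to 1; 1/d is not an eigenvalue of Q0.\<close>
definition circulant_base :: "nat \<Rightarrow> ('s::finite \<Rightarrow> nat) \<Rightarrow> (nat \<Rightarrow> real) \<Rightarrow> real^'s^'s \<Rightarrow> bool" where
  "circulant_base d idx g Q0 \<longleftrightarrow> bij_betw idx UNIV {..<CARD('s)} \<and>
     (\<forall>k<CARD('s). 0 < g k \<and> g k = g ((CARD('s) - k) mod CARD('s))) \<and>
     (\<Sum>k<CARD('s). g k) = 1 \<and>
     Q0 = (\<chi> i j. g ((idx i + CARD('s) - idx j) mod CARD('s))) \<and>
     (\<forall>x::real^'s. Q0 *v x = (1 / real d) *\<^sub>R x \<longrightarrow> x = 0)"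

definition central_branch :: "nat \<Rightarrow> real^'s^'s \<Rightarrow> (real^'s^'s \<Rightarrow> real^'s) \<Rightarrow> (real^'s^'s) set \<Rightarrow> bool" where
  "central_branch d Q0 xbar N \<longleftrightarrow> open N \<and> Q0 \<in> N \<and> xbar Q0 = (\<chi> i. 1) \<and>
     (\<forall>Q\<in>N. \<forall>i. 0 < xbar Q $ i \<and> xbar Q $ i = (\<Sum>j\<in>UNIV. Q $ i $ j * (xbar Q $ j) ^ d)) \<and>
     (\<exists>D. (\<forall>Q\<in>N. (xbar has_derivative blinfun_apply (D Q)) (at Q)) \<and> continuous_on N D)"

text \<open>mu is the central state of the model with transfer matrix Qm: a Gibbs measure, Qm = c Q' with
  c > 0 and Q' in N, and mu is the homogeneous tree-indexed Markov chain with marginal proportional to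
  xbar(Q')^(d+1) and transition matrix P (described through its finite-dimensional distributions on
  the balls around the root []).\<close>
definition central_state :: "nat \<Rightarrow> (real^'s^'s \<Rightarrow> real^'s) \<Rightarrow> (real^'s^'s) set \<Rightarrow> real^'s^'s
    \<Rightarrow> (nat list \<Rightarrow> 's::finite) measure \<Rightarrow> bool" where
  "central_state d xbar N Qm \<mu> \<longleftrightarrow> \<mu> \<in> gibbs_measures d Qm \<and>
     (\<exists>c Q'. 0 < c \<and> Q' \<in> N \<and> Qm = c *\<^sub>R Q' \<and>
       (let x = xbar Q';
            m = (\<lambda>i. x $ i ^ (d + 1) / (\<Sum>k\<in>UNIV. x $ k ^ (d + 1)));
            P = (\<lambda>i j. Q' $ i $ j * x $ j ^ d / (\<Sum>k\<in>UNIV. Q' $ i $ k * x $ k ^ d))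
        in \<forall>n (\<sigma>::nat list \<Rightarrow> 's).
             measure \<mu> {\<omega> \<in> space (Omega d). \<forall>v\<in>tree_ball d n. \<omega> v = \<sigma> v}
             = m (\<sigma> []) * (\<Prod>e\<in>{e \<in> tree_E d. snd e \<in> tree_ball d n}. P (\<sigma> (fst e)) (\<sigma> (snd e)))))"

definition root_trans :: "(nat list \<Rightarrow> 's) measure \<Rightarrow> 's \<Rightarrow> 's \<Rightarrow> real" where
  "root_trans \<mu> i j = measure \<mu> {\<omega> \<in> space \<mu>. \<omega> [] = i \<and> \<omega> [0] = j} / measure \<mu> {\<omega> \<in> space \<mu>. \<omega> [] = i}"

definition p1 :: "(nat list \<Rightarrow> 's::finite) measure \<Rightarrow> real" where
  "p1 \<mu> = Max (range (\<lambda>i. \<Sum>j\<in>UNIV - {i}. root_trans \<mu> i j))"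

end

theory Submission
  imports Defs
begin

text \<open>
  Draw \<omega> and \<omega>' independently from \<mu>. Almost surely \<pi>(\<cdot>|\<omega>) and \<pi>(\<cdot>|\<omega>') are mutually
  singular, hence distinct, since no probability measure is singular to itself. A map f with
  f x \<noteq> f y for almost every pair (x, y) has no atoms, and by countable additivity it cannot
  concentrate on a countable set either.
  The model enters only through the measurability of the fibre {\<omega>. \<pi>(\<cdot>|\<omega>) = \<nu>} of a Gibbs
  measure \<nu>. Because all Boltzmann weights are positive and q \<ge> 2, the DLR equation at the root
  fails for a point mass, so \<nu> is not the default state. The fibre is therefore the set of \<omega>
  along which the finite-volume kernels converge to \<nu> on each of the countably many cylinder
  events, and that set is measurable.
\<close>

section \<open>Maps without atoms\<close>

lemma (in pair_prob_space) AE_AE_of_measure_eq_1: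
  assumes "measure (M1 \<Otimes>\<^sub>M M2) S = 1"
  shows "AE x in M1. AE y in M2. (x, y) \<in> S"
proof -
  have "S \<in> sets (M1 \<Otimes>\<^sub>M M2)"
    using assms measure_notin_sets by fastforce
  with assms have "AE z in M1 \<Otimes>\<^sub>M M2. z \<in> S"
    by (simp add: P.AE_in_set_eq_1)
  then show ?thesis
    by (rule AE_pair)
qed

lemma AE_neq_const_of_AE_AE_neq:
  assumes "AE x in M. AE y in M. f y \<noteq> f x"
  shows "AE x in M. f x \<noteq> c"
  \<comment> \<open>Either a typical point takes the value c, and then almost no point does, or none does;
    no measurability of the fibres of f is needed.\<close>
proof (cases "\<exists>x. (AE y in M. f y \<noteq> f x) \<and> f x = c")
  case True
  then show ?thesis by auto
next
  case False
  from assms show ?thesis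
    by (rule eventually_mono) (use False in blast)
qed

lemma (in prob_space) measure_preimage_countable_eq_0:
  assumes "\<And>c. AE x in M. f x \<noteq> c" and "countable C"
  shows "measure M {x \<in> space M. f x \<in> C} = 0"
proof (cases "{x \<in> space M. f x \<in> C} \<in> events")
  case True
  have "AE x in M. \<forall>c\<in>C. f x \<noteq> c"
    using assms by (intro AE_ball_countable') auto
  then have "AE x in M. x \<notin> {x \<in> space M. f x \<in> C}"
    by (rule AE_mp) auto
  with True show ?thesis
    by (simp add: prob_eq_0)
qed (simp add: measure_notin_sets)

section \<open>Measurability on the configuration space\<close>

lemma space_Omega: "space (Omega d) = PiE (tree_V d) (\<lambda>_. UNIV)"
  by (simp add: Omega_def space_PiM)

lemma measurable_Omega_coordinate [measurable]:
  "(\<lambda>\<omega>. \<omega> v) \<in> measurable (Omega d) (count_space UNIV)"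
proof (cases "v \<in> tree_V d")
  case True
  then show ?thesis
    unfolding Omega_def by (rule measurable_component_singleton)
next
  case False
  then have "\<omega> v = undefined" if "\<omega> \<in> space (Omega d)" for \<omega>
    using that by (auto simp: space_Omega)
  then show ?thesis
    by (subst measurable_cong[where g="\<lambda>_. undefined"]) auto
qed

lemma measurable_conf_merge [measurable]:
  assumes "\<Lambda> \<subseteq> tree_V d" and "\<sigma> \<in> PiE \<Lambda> (\<lambda>_. UNIV)"
  shows "conf_merge \<Lambda> \<sigma> \<in> measurable (Omega d) (Omega d)"
proof -
  have "conf_merge \<Lambda> \<sigma> \<omega> \<in> space (Omega d)" if "\<omega> \<in> space (Omega d)" for \<omega>
    using assms that by (auto simp: space_Omega conf_merge_def PiE_def extensional_def)
  then show ?thesis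
    unfolding Omega_def
    by (intro measurable_PiM_single') (auto simp: conf_merge_def Omega_def[symmetric] space_Omega)
qed

lemma borel_measurable_boltz_weight [measurable]:
  fixes Q :: "real^'s::finite^'s"
  shows "(\<lambda>\<omega>. boltz_weight d Q \<Lambda> (conf_merge Y \<sigma> \<omega>)) \<in> borel_measurable (Omega d)"
  unfolding boltz_weight_def conf_merge_def by measurable

lemma borel_measurable_gibbs_kernel [measurable]:
  fixes Q :: "real^'s::finite^'s"
  assumes "\<Lambda> \<subseteq> tree_V d" and "A \<in> sets (Omega d)"
  shows "(\<lambda>\<omega>. gibbs_kernel d Q \<Lambda> \<omega> A) \<in> borel_measurable (Omega d)"
  unfolding gibbs_kernel_def
proof (intro borel_measurable_divide borel_measurable_sum borel_measurable_times
    borel_measurable_boltz_weight)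
  fix \<sigma> assume "\<sigma> \<in> PiE \<Lambda> (\<lambda>_. UNIV::'s set)"
  with assms show "(\<lambda>\<omega>. indicator A (conf_merge \<Lambda> \<sigma> \<omega>) :: real) \<in> borel_measurable (Omega d)"
    by measurable
qed

lemma sets_Omega_cylinder_event:
  fixes A :: "(nat list \<Rightarrow> 's::finite) set"
  assumes "A \<in> cylinder_events d"
  shows "A \<in> sets (Omega d)"
proof -
  obtain \<Delta> B where A: "A = {\<omega> \<in> space (Omega d). restrict \<omega> \<Delta> \<in> B}"
    and \<Delta>: "finite \<Delta>" "\<Delta> \<subseteq> tree_V d"
    using assms unfolding cylinder_events_def by blast
  let ?B = "B \<inter> PiE \<Delta> (\<lambda>_. UNIV)"
  have "restrict \<omega> \<Delta> \<in> B \<longleftrightarrow> (\<exists>x\<in>?B. \<forall>v\<in>\<Delta>. \<omega> v = x v)" for \<omega>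
  proof
    assume "\<exists>x\<in>?B. \<forall>v\<in>\<Delta>. \<omega> v = x v"
    then obtain x where "x \<in> ?B" and "\<forall>v\<in>\<Delta>. \<omega> v = x v" ..
    then have "restrict \<omega> \<Delta> = x"
      by (auto simp: PiE_def extensional_def)
    with \<open>x \<in> ?B\<close> show "restrict \<omega> \<Delta> \<in> B" by simp
  qed (intro bexI[where x="restrict \<omega> \<Delta>"], auto)
  then have "A = {\<omega> \<in> space (Omega d). \<exists>x\<in>?B. \<forall>v\<in>\<Delta>. \<omega> v = x v}"
    unfolding A by blast
  also have "\<dots> \<in> sets (Omega d)"
  proof (intro sets.sets_Collect_finite_Ex sets.sets_Collect_finite_All)
    show "finite ?B"
      using \<Delta> by (intro finite_Int disjI2 finite_PiE) auto
  qed (use \<Delta> in \<open>auto simp: pred_def[symmetric]\<close>)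
  finally show ?thesis .
qed

lemma countable_cylinder_events: "countable (cylinder_events d :: (nat list \<Rightarrow> 's::finite) set set)"
proof (rule countable_subset)
  let ?I = "SIGMA \<Delta>:{\<Delta>. finite \<Delta> \<and> \<Delta> \<subseteq> tree_V d}. Pow (PiE \<Delta> (\<lambda>_. UNIV :: 's set))"
  let ?cyl = "\<lambda>(\<Delta>, B). {\<omega> \<in> space (Omega d). restrict \<omega> \<Delta> \<in> B}"
  show "cylinder_events d \<subseteq> ?cyl ` ?I"
  proof
    fix A :: "(nat list \<Rightarrow> 's) set"
    assume "A \<in> cylinder_events d"
    then obtain \<Delta> B where "A = ?cyl (\<Delta>, B)" and "finite \<Delta>" "\<Delta> \<subseteq> tree_V d"
      unfolding cylinder_events_def by auto
    then show "A \<in> ?cyl ` ?I"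
      by (intro image_eqI[where x="(\<Delta>, B \<inter> PiE \<Delta> (\<lambda>_. UNIV))"]) auto
  qed
  have "countable {\<Delta>::nat list set. finite \<Delta> \<and> \<Delta> \<subseteq> tree_V d}"
    by (rule countable_subset[OF _ countable_Collect_finite]) auto
  then show "countable (?cyl ` ?I)"
    by (intro countable_image countable_SIGMA) (auto intro!: countable_finite simp: finite_PiE)
qed

section \<open>Limit states and the kernel \<pi>\<close>

lemma tendsto_iff_eventually_dist_less_1_div_Suc:
  "(f \<longlongrightarrow> c) F \<longleftrightarrow> (\<forall>n::nat. eventually (\<lambda>x. dist (f x) c < 1 / Suc n) F)"
  unfolding tendsto_iff
proof (intro iffI allI impI)
  fix n :: nat assume "\<forall>e>0. eventually (\<lambda>x. dist (f x) c < e) F"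
  moreover have "0 < 1 / real (Suc n)" by simp
  ultimately show "eventually (\<lambda>x. dist (f x) c < 1 / Suc n) F" by blast
next
  fix e :: real assume ev: "\<forall>n::nat. eventually (\<lambda>x. dist (f x) c < 1 / Suc n) F" and "0 < e"
  obtain n :: nat where n: "1 / Suc n < e"
    using \<open>0 < e\<close> by (rule nat_approx_posE)
  from ev[rule_format, of n] show "eventually (\<lambda>x. dist (f x) c < e) F"
    by (rule eventually_mono) (use n in linarith)
qed

lemma eventually_finite_subsets_at_top_Bex:
  "eventually P (finite_subsets_at_top I) \<longleftrightarrow>
    (\<exists>X\<in>{X. finite X \<and> X \<subseteq> I}. \<forall>Y\<in>{Y. finite Y \<and> Y \<subseteq> I}. X \<subseteq> Y \<longrightarrow> P Y)"
  unfolding eventually_finite_subsets_at_top Bex_def Ball_def mem_Collect_eq by meson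

lemma is_limit_state_unique:
  fixes \<nu>1 \<nu>2 :: "(nat list \<Rightarrow> 's::finite) measure"
  assumes "is_limit_state d Q \<omega> \<nu>1" and "is_limit_state d Q \<omega> \<nu>2"
  shows "\<nu>1 = \<nu>2"
proof (rule measure_eqI_PiM_infinite[where I="tree_V d" and M="\<lambda>_. count_space UNIV"])
  show "sets \<nu>1 = sets (PiM (tree_V d) (\<lambda>_. count_space UNIV))"
    and "sets \<nu>2 = sets (PiM (tree_V d) (\<lambda>_. count_space UNIV))"
    and "finite_measure \<nu>1"
    using assms by (auto simp: is_limit_state_def Omega_def prob_space_def)
  fix J and X :: "nat list \<Rightarrow> 's set" assume J: "finite J" "J \<subseteq> tree_V d"
  let ?A = "prod_emb (tree_V d) (\<lambda>_. count_space UNIV) J (PiE J X)"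
  have "?A = {\<omega> \<in> space (Omega d). restrict \<omega> J \<in> PiE J X}"
    by (auto simp: prod_emb_def Omega_def space_PiM)
  with J have "?A \<in> cylinder_events d"
    unfolding cylinder_events_def by blast
  with assms have "measure \<nu>1 ?A = measure \<nu>2 ?A"
    unfolding is_limit_state_def by (meson finite_subsets_at_top_neq_bot tendsto_unique)
  with assms show "emeasure \<nu>1 ?A = emeasure \<nu>2 ?A"
    by (simp add: is_limit_state_def prob_space_def finite_measure.emeasure_eq_measure)
qed

lemma sets_is_limit_state:
  fixes Q :: "real^'s::finite^'s"
  shows "{\<omega> \<in> space (Omega d). is_limit_state d Q \<omega> \<nu>} \<in> sets (Omega d)"
proof (cases "sets \<nu> = sets (Omega d) \<and> prob_space \<nu>")
  case False
  then have "{\<omega> \<in> space (Omega d). is_limit_state d Q \<omega> \<nu>} = {}"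
    by (auto simp: is_limit_state_def)
  then show ?thesis
    by (metis sets.empty_sets)
next
  case True
  let ?FS = "{X. finite X \<and> X \<subseteq> tree_V d}"
  have "{\<omega> \<in> space (Omega d). is_limit_state d Q \<omega> \<nu>} =
    {\<omega> \<in> space (Omega d). \<forall>A\<in>cylinder_events d. \<forall>n::nat. \<exists>X\<in>?FS. \<forall>Y\<in>?FS. X \<subseteq> Y \<longrightarrow>
        dist (gibbs_kernel d Q Y \<omega> A) (measure \<nu> A) < 1 / Suc n}"
    using True by (simp add: is_limit_state_def tendsto_iff_eventually_dist_less_1_div_Suc
        eventually_finite_subsets_at_top_Bex)
  also have "\<dots> \<in> sets (Omega d)"
  proof -
    have countable_FS: "countable ?FS"
      by (rule countable_subset[OF _ countable_Collect_finite]) auto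
    show ?thesis
    proof (intro sets.sets_Collect_countable_All'[OF _ countable_cylinder_events]
        sets.sets_Collect_countable_All sets.sets_Collect_countable_Ex'[OF _ countable_FS]
        sets.sets_Collect_countable_All'[OF _ countable_FS] sets.sets_Collect_imp sets.sets_Collect_const)
      fix A :: "(nat list \<Rightarrow> 's) set" and n :: nat and Y
      assume "A \<in> cylinder_events d" and "Y \<in> ?FS"
      then have [measurable]: "A \<in> sets (Omega d)" "Y \<subseteq> tree_V d"
        by (auto intro: sets_Omega_cylinder_event)
      show "{\<omega> \<in> space (Omega d). dist (gibbs_kernel d Q Y \<omega> A) (measure \<nu> A) < 1 / Suc n}
          \<in> sets (Omega d)"
        by measurable
    qed
  qed
  finally show ?thesis .
qed

lemma is_limit_state_pi_state:
  "\<exists>\<nu>. is_limit_state d Q \<omega> \<nu> \<Longrightarrow> is_limit_state d Q \<omega> (pi_state d Q \<omega>)"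
  unfolding pi_state_def by (simp add: someI_ex)

lemma pi_state_eq_default_state:
  "\<nexists>\<nu>. is_limit_state d Q \<omega> \<nu> \<Longrightarrow> pi_state d Q \<omega> = default_state d"
  unfolding pi_state_def by (rule if_not_P)

lemma sets_default_state: "sets (default_state d) = sets (Omega d)"
  and prob_space_default_state: "prob_space (default_state d)"
  by (auto simp: default_state_def space_Omega intro!: prob_space_return)

lemma sets_pi_state: "sets (pi_state d Q \<omega>) = sets (Omega d)"
  and prob_space_pi_state: "prob_space (pi_state d Q \<omega>)"
proof -
  have "is_limit_state d Q \<omega> (pi_state d Q \<omega>) \<or> pi_state d Q \<omega> = default_state d"
    using is_limit_state_pi_state pi_state_eq_default_state by blast
  then show "sets (pi_state d Q \<omega>) = sets (Omega d)" and "prob_space (pi_state d Q \<omega>)"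
    by (auto simp: is_limit_state_def sets_default_state prob_space_default_state)
qed

lemma pi_state_eq_iff_is_limit_state:
  fixes \<nu> :: "(nat list \<Rightarrow> 's::finite) measure"
  assumes "\<nu> \<noteq> default_state d"
  shows "pi_state d Q \<omega> = \<nu> \<longleftrightarrow> is_limit_state d Q \<omega> \<nu>"
proof (cases "\<exists>\<nu>. is_limit_state d Q \<omega> \<nu>")
  case True
  then show ?thesis
    using is_limit_state_pi_state is_limit_state_unique by metis
next
  case False
  with assms show ?thesis
    by (simp add: pi_state_eq_default_state)
qed

lemma not_mutually_singular_self:
  assumes "sets \<nu> = sets (Omega d)" and "prob_space \<nu>"
  shows "\<not> mutually_singular d \<nu> \<nu>"
proof
  assume "mutually_singular d \<nu> \<nu>"
  then obtain A where A: "A \<in> sets \<nu>" "measure \<nu> A = 0" "measure \<nu> (space \<nu> - A) = 0"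
    using assms(1) sets_eq_imp_space_eq[OF assms(1)] unfolding mutually_singular_def by auto
  interpret prob_space \<nu> by fact
  from A show False
    by (simp add: prob_compl)
qed

section \<open>Fibres of \<pi> over Gibbs measures\<close>

lemma boltz_weight_pos:
  assumes "\<forall>i j. 0 < Q $ i $ j"
  shows "0 < boltz_weight d Q \<Lambda> \<eta>"
  unfolding boltz_weight_def using assms by (intro prod_pos) auto

lemma gibbs_kernel_less_1:
  fixes Q :: "real^'s::finite^'s"
  assumes "\<forall>i j. 0 < Q $ i $ j" and "finite \<Lambda>"
    and "\<sigma> \<in> PiE \<Lambda> (\<lambda>_. UNIV)" and "conf_merge \<Lambda> \<sigma> \<omega> \<notin> A"
  shows "gibbs_kernel d Q \<Lambda> \<omega> A < 1"
proof -
  let ?S = "PiE \<Lambda> (\<lambda>_. UNIV :: 's set)"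
  let ?w = "\<lambda>\<tau>. boltz_weight d Q \<Lambda> (conf_merge \<Lambda> \<tau> \<omega>)"
  have finite_S: "finite ?S"
    using assms(2) by (intro finite_PiE) auto
  have w_pos: "0 < ?w \<tau>" for \<tau>
    using assms(1) by (rule boltz_weight_pos)
  have "(\<Sum>\<tau>\<in>?S. ?w \<tau> * indicator A (conf_merge \<Lambda> \<tau> \<omega>)) < (\<Sum>\<tau>\<in>?S. ?w \<tau>)"
  proof (rule sum_strict_mono_ex1[OF finite_S])
    show "\<forall>\<tau>\<in>?S. ?w \<tau> * indicator A (conf_merge \<Lambda> \<tau> \<omega>) \<le> ?w \<tau>"
      using w_pos by (simp add: indicator_def less_imp_le)
    show "\<exists>\<tau>\<in>?S. ?w \<tau> * indicator A (conf_merge \<Lambda> \<tau> \<omega>) < ?w \<tau>"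
      using assms(3,4) w_pos[of \<sigma>] by (intro bexI[of _ \<sigma>]) auto
  qed
  moreover have "0 < (\<Sum>\<tau>\<in>?S. ?w \<tau>)"
    using assms(3) finite_S w_pos by (intro sum_pos) auto
  ultimately show ?thesis
    unfolding gibbs_kernel_def by simp
qed

lemma default_state_not_gibbs:
  fixes Q :: "real^'s::finite^'s"
  assumes Q_pos: "\<forall>i j. 0 < Q $ i $ j" and "2 \<le> CARD('s)"
  shows "default_state d \<notin> gibbs_measures d Q"
proof
  assume gibbs: "default_state d \<in> gibbs_measures d Q"
  define \<eta> where "\<eta> = (\<lambda>v\<in>tree_V d. undefined :: 's)"
  define A where "A = {\<omega> \<in> space (Omega d). \<omega> [] = \<eta> []}"
  have \<eta>: "\<eta> \<in> space (Omega d)"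
    by (simp add: \<eta>_def space_Omega)
  have root: "[] \<in> tree_V d"
    by (simp add: tree_V_def)
  have A [measurable]: "A \<in> sets (Omega d)"
    unfolding A_def by measurable
  obtain a b :: 's where "a \<noteq> b"
    using assms(2) card_le_Suc0_iff_eq[of "UNIV :: 's set"] by auto
  then obtain s :: 's where s: "s \<noteq> \<eta> []"
    by metis
  have "1 = measure (default_state d) A"
    using \<eta> A by (simp add: default_state_def \<eta>_def[symmetric] measure_return A_def)
  also have "\<dots> = (\<integral>\<omega>. gibbs_kernel d Q {[]} \<omega> A \<partial>default_state d)"
    using gibbs A root unfolding gibbs_measures_def by auto
  also have "\<dots> = gibbs_kernel d Q {[]} \<eta> A"
    unfolding default_state_def \<eta>_def[symmetric] using \<eta> root by (intro integral_return) simp_all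
  also have "\<dots> < 1"
    by (rule gibbs_kernel_less_1[where \<sigma>="\<lambda>v\<in>{[]}. s"])
      (use Q_pos s in \<open>auto simp: conf_merge_def A_def\<close>)
  finally show False by simp
qed

lemma sets_pi_state_fiber:
  fixes Q :: "real^'s::finite^'s"
  assumes "\<forall>i j. 0 < Q $ i $ j" and "2 \<le> CARD('s)" and "\<nu> \<in> gibbs_measures d Q"
  shows "{\<omega> \<in> space (Omega d). pi_state d Q \<omega> = \<nu>} \<in> sets (Omega d)"
proof -
  have "\<nu> \<noteq> default_state d"
    using assms default_state_not_gibbs by blast
  then show ?thesis
    by (simp add: pi_state_eq_iff_is_limit_state sets_is_limit_state)
qed

theorem corollary3p5:
  fixes d :: nat and u :: "'s::finite \<Rightarrow> 's \<Rightarrow> real" and \<Psi> :: "'s \<Rightarrow> real"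
    and idx :: "'s \<Rightarrow> nat" and g :: "nat \<Rightarrow> real" and Q0 :: "real^'s^'s"
    and xbar :: "real^'s^'s \<Rightarrow> real^'s" and N :: "(real^'s^'s) set"
    and \<beta> \<beta>0 :: real and p10 :: "real \<Rightarrow> real" and \<mu> :: "(nat list \<Rightarrow> 's) measure"
  assumes "model_class d u \<Psi>"
    and "circulant_base d idx g Q0"
    and "central_branch d Q0 xbar N"
    and "0 < \<beta>0"
    and "\<forall>\<beta>'>\<beta>0. 0 < p10 \<beta>'"
    and "\<forall>\<beta>' \<mu>'. \<beta>0 < \<beta>' \<longrightarrow> central_state d xbar N (transfer \<beta>' u \<Psi> d) \<mu>' \<longrightarrow> p1 \<mu>' < p10 \<beta>' \<longrightarrow>
           measure (pair_measure \<mu>' \<mu>')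
             {(\<omega>, \<omega>') \<in> space (Omega d) \<times> space (Omega d).
                mutually_singular d (pi_state d (transfer \<beta>' u \<Psi> d) \<omega>) (pi_state d (transfer \<beta>' u \<Psi> d) \<omega>')} = 1"
    and "\<beta>0 < \<beta>"
    and "central_state d xbar N (transfer \<beta> u \<Psi> d) \<mu>"
    and "p1 \<mu> < p10 \<beta>"
  shows "(\<forall>\<nu>\<in>extremal_gibbs d (transfer \<beta> u \<Psi> d).
            {\<omega> \<in> space (Omega d). pi_state d (transfer \<beta> u \<Psi> d) \<omega> = \<nu>} \<in> sets (Omega d) \<and>
            measure \<mu> {\<omega> \<in> space (Omega d). pi_state d (transfer \<beta> u \<Psi> d) \<omega> = \<nu>} = 0)
       \<and> (\<forall>C. countable C \<longrightarrow>
            measure \<mu> {\<omega> \<in> space (Omega d). pi_state d (transfer \<beta> u \<Psi> d) \<omega> \<in> C} < 1)"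
proof -
  let ?Q = "transfer \<beta> u \<Psi> d"
  let ?\<pi> = "pi_state d ?Q"
  have "\<mu> \<in> gibbs_measures d ?Q"
    using assms(8) by (simp add: central_state_def)
  then have sets_\<mu>: "sets \<mu> = sets (Omega d)" and "prob_space \<mu>"
    by (auto simp: gibbs_measures_def)
  interpret prob_space \<mu> by fact
  interpret pair_prob_space \<mu> \<mu> ..
  have "AE \<omega> in \<mu>. AE \<omega>' in \<mu>. mutually_singular d (?\<pi> \<omega>) (?\<pi> \<omega>')"
    using AE_AE_of_measure_eq_1[OF assms(6)[rule_format, OF assms(7-9)]]
    by (elim eventually_mono) auto
  then have "AE \<omega> in \<mu>. AE \<omega>' in \<mu>. ?\<pi> \<omega>' \<noteq> ?\<pi> \<omega>"
    by (elim eventually_mono) (metis not_mutually_singular_self sets_pi_state prob_space_pi_state)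
  then have no_atom: "AE \<omega> in \<mu>. ?\<pi> \<omega> \<noteq> \<nu>" for \<nu>
    by (rule AE_neq_const_of_AE_AE_neq)
  have null: "measure \<mu> {\<omega> \<in> space (Omega d). ?\<pi> \<omega> \<in> C} = 0" if "countable C" for C
    using prob_space.measure_preimage_countable_eq_0[OF \<open>prob_space \<mu>\<close> no_atom that]
    by (simp add: sets_eq_imp_space_eq[OF sets_\<mu>])
  then have null_fibre: "measure \<mu> {\<omega> \<in> space (Omega d). ?\<pi> \<omega> = \<nu>} = 0" for \<nu>
    using null[of "{\<nu>}"] by simp
  have "\<forall>i j. 0 < ?Q $ i $ j" and "2 \<le> CARD('s)"
    using assms(1) by (auto simp: transfer_def model_class_def)
  then have "{\<omega> \<in> space (Omega d). ?\<pi> \<omega> = \<nu>} \<in> sets (Omega d)" if "\<nu> \<in> extremal_gibbs d ?Q" for \<nu>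
    using that by (intro sets_pi_state_fiber) (auto simp: extremal_gibbs_def)
  with null null_fibre show ?thesis
    by simp
qed

end
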